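(* Let $a<b$, $k>0$, $\lambda\in(0,\pi/2]$ and $f\in C^3([a,b])$. For every sequence $\{\epsilon_n\}_{n=0}^\infty$ with $\epsilon_n\in J_n$ for all $n$, and for every $n$, the Neumann problem $$\epsilon_n y''+ky=f(t),\quad t\in[a,b],\qquad y'(a)=0,\ y'(b)=0$$ has a unique solution $y_{\epsilon_n}$, and $y_{\epsilon_n}\to u$ uniformly on $[a,b]$ as $n\to\infty$, where $u(t)=f(t)/k$ is the solution of the reduced equation $ky=f(t)$. More precisely, there is a constant $C$ (depending only on $f,k,\lambda,a,b$, not on $n$) such that $$\sup_{t\in[a,b]}\Big|y_{\epsilon_n}(t)-\frac{f(t)}{k}\Big|\le C\sqrt{\epsilon_n}\quad\text{for all } n,$$ i.e. $y_{\epsilon_n}(t)=f(t)/k+\mathcal O(\sqrt{\epsilon_n})$ uniformly on $[a,b]$.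
   Context: For a fixed constant $\lambda\in(0,\pi/2]$ and $n=0,1,2,\dots$ define the closed intervals $$J_n=\left[\,k\left(\frac{b-a}{(n+1)\pi-\lambda}\right)^2,\ k\left(\frac{b-a}{n\pi+\lambda}\right)^2\,\right].$$ Note that $\epsilon\in J_n$ iff $\sqrt{k/\epsilon}\,(b-a)\in[n\pi+\lambda,(n+1)\pi-\lambda]$. *)

theory Defs
  imports "HOL-Analysis.Analysis"
begin

definition J_int :: "real \<Rightarrow> real \<Rightarrow> real \<Rightarrow> real \<Rightarrow> nat \<Rightarrow> real set" where
  "J_int k a b lam n =
     {k * ((b - a) / ((real n + 1) * pi - lam))^2 .. k * ((b - a) / (real n * pi + lam))^2}"

definition C3_on :: "real \<Rightarrow> real \<Rightarrow> (real \<Rightarrow> real) \<Rightarrow> bool" where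
  "C3_on a b f \<longleftrightarrow> (\<exists>f1 f2 f3.
     (\<forall>t\<in>{a..b}. (f has_real_derivative f1 t) (at t within {a..b})
                \<and> (f1 has_real_derivative f2 t) (at t within {a..b})
                \<and> (f2 has_real_derivative f3 t) (at t within {a..b}))
     \<and> continuous_on {a..b} f3)"

definition neumann_sol :: "real \<Rightarrow> real \<Rightarrow> (real \<Rightarrow> real) \<Rightarrow> real \<Rightarrow> real \<Rightarrow> (real \<Rightarrow> real) \<Rightarrow> bool" where
  "neumann_sol eps k f a b y \<longleftrightarrow> (\<exists>y1 y2.
     (\<forall>t\<in>{a..b}. (y has_real_derivative y1 t) (at t within {a..b})
                \<and> (y1 has_real_derivative y2 t) (at t within {a..b})
                \<and> eps * y2 t + k * y t = f t)
     \<and> continuous_on {a..b} y2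
     \<and> y1 a = 0 \<and> y1 b = 0)"

end

theory Submission
  imports Defs "HOL-Real_Asymp.Real_Asymp"
begin

text \<open>
  Put \<open>w = sqrt (k / \<epsilon>)\<close>. Substituting \<open>y = f / k + z\<close> turns the problem into
  \<open>z'' + w\<^sup>2 z = - f'' / k\<close> with Neumann data \<open>z' = - f' / k\<close> at both ends. Duhamel's formula
  gives a particular solution of size \<open>O(1 / w)\<close>, and the correction
  \<open>c cos (w (t - a)) + d sin (w (t - a))\<close> fitting the boundary data has coefficients of size
  \<open>O(1 / (w \<bar>sin (w (b - a))\<bar>))\<close>. For \<open>\<epsilon> \<in> J\<^sub>n\<close> the number \<open>w (b - a)\<close> stays at distance
  at least \<open>\<lambda>\<close> from the multiples of \<open>\<pi>\<close>, so \<open>\<bar>sin (w (b - a))\<bar> \<ge> sin \<lambda>\<close> and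
  \<open>\<bar>y - f / k\<bar> = O(1 / w) = O(\<surd>\<epsilon>)\<close>. The same non-resonance makes the homogeneous Neumann
  problem have only the trivial solution, by conservation of the energy \<open>z'\<^sup>2 + w\<^sup>2 z\<^sup>2\<close>.
\<close>

text \<open>\<open>duhamel w a g t = (1/w) \<integral>\<^sub>a\<^sup>t sin (w (t - s)) g s ds\<close>, with the kernel expanded so
  that \<open>t\<close> leaves the integrand.\<close>
definition duhamel :: "real \<Rightarrow> real \<Rightarrow> (real \<Rightarrow> real) \<Rightarrow> real \<Rightarrow> real" where
  "duhamel w a g t =
     (sin (w * t) * integral {a..t} (\<lambda>s. cos (w * s) * g s)
      - cos (w * t) * integral {a..t} (\<lambda>s. sin (w * s) * g s)) / w"

definition duhamel_deriv :: "real \<Rightarrow> real \<Rightarrow> (real \<Rightarrow> real) \<Rightarrow> real \<Rightarrow> real" where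
  "duhamel_deriv w a g t =
     cos (w * t) * integral {a..t} (\<lambda>s. cos (w * s) * g s)
     + sin (w * t) * integral {a..t} (\<lambda>s. sin (w * s) * g s)"

lemma duhamel_deriv_start [simp]: "duhamel_deriv w a g a = 0"
  by (simp add: duhamel_deriv_def)

lemma duhamel_has_real_derivative:
  assumes "continuous_on {a..b} g" "t \<in> {a..b}" "w \<noteq> 0"
  shows "(duhamel w a g has_real_derivative duhamel_deriv w a g t) (at t within {a..b})"
proof -
  define A where "A = (\<lambda>t. integral {a..t} (\<lambda>s. cos (w * s) * g s))"
  define B where "B = (\<lambda>t. integral {a..t} (\<lambda>s. sin (w * s) * g s))"
  have "(A has_real_derivative cos (w * t) * g t) (at t within {a..b})"
    and "(B has_real_derivative sin (w * t) * g t) (at t within {a..b})"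
    unfolding A_def B_def using assms
    by (auto intro!: integral_has_real_derivative continuous_intros)
  then have "((\<lambda>t. (sin (w * t) * A t - cos (w * t) * B t) / w) has_real_derivative
      cos (w * t) * A t + sin (w * t) * B t) (at t within {a..b})"
    by (auto intro!: derivative_eq_intros simp: field_simps \<open>w \<noteq> 0\<close>)
  then show ?thesis
    by (simp add: duhamel_def[abs_def] duhamel_deriv_def A_def B_def)
qed

lemma duhamel_deriv_has_real_derivative:
  assumes "continuous_on {a..b} g" "t \<in> {a..b}" "w \<noteq> 0"
  shows "(duhamel_deriv w a g has_real_derivative g t - w\<^sup>2 * duhamel w a g t) (at t within {a..b})"
proof -
  define A where "A = (\<lambda>t. integral {a..t} (\<lambda>s. cos (w * s) * g s))"
  define B where "B = (\<lambda>t. integral {a..t} (\<lambda>s. sin (w * s) * g s))"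
  have "(A has_real_derivative cos (w * t) * g t) (at t within {a..b})"
    and "(B has_real_derivative sin (w * t) * g t) (at t within {a..b})"
    unfolding A_def B_def using assms
    by (auto intro!: integral_has_real_derivative continuous_intros)
  moreover have "(cos (w * t))\<^sup>2 * g t + (sin (w * t))\<^sup>2 * g t = g t"
    by (metis distrib_right mult_1 sin_cos_squared_add2)
  ultimately have "((\<lambda>t. cos (w * t) * A t + sin (w * t) * B t) has_real_derivative
      g t - w\<^sup>2 * ((sin (w * t) * A t - cos (w * t) * B t) / w)) (at t within {a..b})"
    by (auto intro!: derivative_eq_intros simp: field_simps power2_eq_square \<open>w \<noteq> 0\<close>)
  then show ?thesis
    by (simp add: duhamel_def duhamel_deriv_def[abs_def] A_def B_def)
qed

lemma abs_integral_bounded_mult_le: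
  fixes g \<phi> :: "real \<Rightarrow> real"
  assumes "continuous_on {a..b} g" "continuous_on {a..b} \<phi>" "t \<in> {a..b}"
    and "\<And>s. s \<in> {a..b} \<Longrightarrow> \<bar>g s\<bar> \<le> M" and "\<And>s. \<bar>\<phi> s\<bar> \<le> 1"
  shows "\<bar>integral {a..t} (\<lambda>s. \<phi> s * g s)\<bar> \<le> M * (b - a)"
proof -
  have "continuous_on {a..t} (\<lambda>s. \<phi> s * g s)"
    using assms(1-3) by (auto intro!: continuous_intros elim: continuous_on_subset)
  then have "norm (integral {a..t} (\<lambda>s. \<phi> s * g s)) \<le> M * (t - a)"
    using assms(3-5)
    by (intro integral_bound) (auto simp: abs_mult intro: order_trans[OF mult_left_le_one_le])
  also have "\<dots> \<le> M * (b - a)"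
    using assms(3) assms(4)[of a] by (intro mult_left_mono) auto
  finally show ?thesis by simp
qed

lemma duhamel_bounds:
  assumes "continuous_on {a..b} g" "t \<in> {a..b}" "w > 0"
    and "\<And>s. s \<in> {a..b} \<Longrightarrow> \<bar>g s\<bar> \<le> M"
  shows "\<bar>duhamel w a g t\<bar> \<le> 2 * M * (b - a) / w"
    and "\<bar>duhamel_deriv w a g t\<bar> \<le> 2 * M * (b - a)"
proof -
  define A where "A = integral {a..t} (\<lambda>s. cos (w * s) * g s)"
  define B where "B = integral {a..t} (\<lambda>s. sin (w * s) * g s)"
  have "\<bar>A\<bar> \<le> M * (b - a)" "\<bar>B\<bar> \<le> M * (b - a)"
    unfolding A_def B_def using assms
    by (auto intro!: abs_integral_bounded_mult_le continuous_intros)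
  moreover have "\<bar>sin (w * t) * A\<bar> \<le> \<bar>A\<bar>" "\<bar>cos (w * t) * A\<bar> \<le> \<bar>A\<bar>"
    "\<bar>sin (w * t) * B\<bar> \<le> \<bar>B\<bar>" "\<bar>cos (w * t) * B\<bar> \<le> \<bar>B\<bar>"
    by (simp_all add: abs_mult mult_left_le_one_le)
  ultimately have "\<bar>sin (w * t) * A - cos (w * t) * B\<bar> \<le> 2 * M * (b - a)"
    and "\<bar>cos (w * t) * A + sin (w * t) * B\<bar> \<le> 2 * M * (b - a)"
    by linarith+
  then show "\<bar>duhamel w a g t\<bar> \<le> 2 * M * (b - a) / w"
    and "\<bar>duhamel_deriv w a g t\<bar> \<le> 2 * M * (b - a)"
    using assms(3) by (simp_all add: duhamel_def duhamel_deriv_def A_def B_def divide_right_mono)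
qed

lemma harmonic_ivp_unique:
  fixes y y' :: "real \<Rightarrow> real" and w :: real
  assumes "w > 0"
    and y: "\<And>t. t \<in> {a..b} \<Longrightarrow> (y has_real_derivative y' t) (at t within {a..b})"
    and y': "\<And>t. t \<in> {a..b} \<Longrightarrow> (y' has_real_derivative - w\<^sup>2 * y t) (at t within {a..b})"
    and t: "t \<in> {a..b}"
  shows "y t = y a * cos (w * (t - a)) + y' a / w * sin (w * (t - a))"
    and "y' t = y' a * cos (w * (t - a)) - w * y a * sin (w * (t - a))"
proof -
  define q where "q t = y t - y a * cos (w * (t - a)) - y' a / w * sin (w * (t - a))" for t
  define q' where "q' t = y' t + w * y a * sin (w * (t - a)) - y' a * cos (w * (t - a))" for t
  \<comment> \<open>the energy of the deviation \<open>q\<close> from the expected solution is conserved and vanishes at \<open>a\<close>\<close>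
  define E where "E t = (q' t)\<^sup>2 + w\<^sup>2 * (q t)\<^sup>2" for t
  have "(E has_real_derivative 0) (at s within {a..b})" if s: "s \<in> {a..b}" for s
  proof -
    have "(q has_real_derivative q' s) (at s within {a..b})"
      unfolding q_def[abs_def] q'_def using y[OF s] \<open>w > 0\<close>
      by (auto intro!: derivative_eq_intros)
    moreover have "(q' has_real_derivative - w\<^sup>2 * q s) (at s within {a..b})"
      unfolding q'_def[abs_def] q_def using y'[OF s] \<open>w > 0\<close>
      by (auto intro!: derivative_eq_intros simp: field_simps power2_eq_square)
    ultimately show ?thesis
      unfolding E_def[abs_def] by (auto intro!: derivative_eq_intros simp: algebra_simps)
  qed
  then obtain c where "\<forall>s\<in>{a..b}. E s = c"
    using has_field_derivative_zero_constant[of "{a..b}" E] by auto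
  then have "E t = E a"
    using t by auto
  also have "E a = 0"
    by (simp add: E_def q_def q'_def)
  finally have "q t = 0 \<and> q' t = 0"
    using \<open>w > 0\<close> by (simp add: E_def add_nonneg_eq_0_iff)
  then show "y t = y a * cos (w * (t - a)) + y' a / w * sin (w * (t - a))"
    and "y' t = y' a * cos (w * (t - a)) - w * y a * sin (w * (t - a))"
    by (simp_all add: q_def q'_def)
qed

lemma harmonic_neumann_eq_0:
  fixes y y' :: "real \<Rightarrow> real" and w :: real
  assumes "a \<le> b" "w > 0" "sin (w * (b - a)) \<noteq> 0"
    and "\<And>t. t \<in> {a..b} \<Longrightarrow> (y has_real_derivative y' t) (at t within {a..b})"
    and "\<And>t. t \<in> {a..b} \<Longrightarrow> (y' has_real_derivative - w\<^sup>2 * y t) (at t within {a..b})"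
    and "y' a = 0" "y' b = 0" "t \<in> {a..b}"
  shows "y t = 0"
proof -
  have "w * y a * sin (w * (b - a)) = 0"
    using harmonic_ivp_unique(2)[OF assms(2,4,5), of b] assms(1,6,7) by simp
  then have "y a = 0"
    using assms(2,3) by simp
  then show ?thesis
    using harmonic_ivp_unique(1)[OF assms(2,4,5,8)] assms(6) by simp
qed

lemma harmonic_neumann_solution:
  fixes g :: "real \<Rightarrow> real" and w \<sigma> \<alpha> \<beta> M :: real
  assumes "a \<le> b" "w > 0" "continuous_on {a..b} g"
    and "\<And>s. s \<in> {a..b} \<Longrightarrow> \<bar>g s\<bar> \<le> M"
    and "0 < \<sigma>" "\<sigma> \<le> \<bar>sin (w * (b - a))\<bar>"
  obtains z z' where
    "\<And>t. t \<in> {a..b} \<Longrightarrow> (z has_real_derivative z' t) (at t within {a..b})"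
    "\<And>t. t \<in> {a..b} \<Longrightarrow> (z' has_real_derivative g t - w\<^sup>2 * z t) (at t within {a..b})"
    "z' a = \<alpha>" "z' b = \<beta>"
    "\<And>t. t \<in> {a..b} \<Longrightarrow>
       \<bar>z t\<bar> \<le> (2 * M * (b - a) + (2 * M * (b - a) + \<bar>\<alpha>\<bar> + \<bar>\<beta>\<bar>) / \<sigma> + \<bar>\<alpha>\<bar>) / w"
proof -
  define L where "L = b - a"
  define p where "p = duhamel w a g"
  define p' where "p' = duhamel_deriv w a g"
  define d where "d = \<alpha> / w"
  define c where "c = (p' b + \<alpha> * cos (w * L) - \<beta>) / (w * sin (w * L))"
  define z where "z t = p t + c * cos (w * (t - a)) + d * sin (w * (t - a))" for t
  define z' where "z' t = p' t - c * w * sin (w * (t - a)) + d * w * cos (w * (t - a))" for t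
  have sin_L: "sin (w * L) \<noteq> 0"
    using assms(5,6) by (auto simp: L_def)
  show thesis
  proof
    fix t assume t: "t \<in> {a..b}"
    have "(p has_real_derivative p' t) (at t within {a..b})"
      and "(p' has_real_derivative g t - w\<^sup>2 * p t) (at t within {a..b})"
      using duhamel_has_real_derivative[OF assms(3) t] duhamel_deriv_has_real_derivative[OF assms(3) t]
        assms(2) by (simp_all add: p_def p'_def)
    then show "(z has_real_derivative z' t) (at t within {a..b})"
      and "(z' has_real_derivative g t - w\<^sup>2 * z t) (at t within {a..b})"
      unfolding z_def[abs_def] z'_def[abs_def]
      by (auto intro!: derivative_eq_intros simp: algebra_simps power2_eq_square)
    have "\<bar>c * cos (w * (t - a))\<bar> \<le> \<bar>c\<bar>" "\<bar>d * sin (w * (t - a))\<bar> \<le> \<bar>d\<bar>"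
      by (simp_all add: abs_mult mult_right_le_one_le)
    moreover have "\<bar>p t\<bar> \<le> 2 * M * (b - a) / w"
      unfolding p_def by (rule duhamel_bounds(1)[OF assms(3) t assms(2,4)])
    moreover have "\<bar>d\<bar> = \<bar>\<alpha>\<bar> / w"
      using assms(2) by (simp add: d_def)
    moreover have "\<bar>c\<bar> \<le> (2 * M * (b - a) + \<bar>\<alpha>\<bar> + \<bar>\<beta>\<bar>) / \<sigma> / w"
    proof -
      have "\<bar>p' b\<bar> \<le> 2 * M * (b - a)"
        unfolding p'_def using assms(1) by (intro duhamel_bounds(2)[OF assms(3) _ assms(2,4)]) auto
      moreover have "\<bar>\<alpha> * cos (w * L)\<bar> \<le> \<bar>\<alpha>\<bar>"
        by (simp add: abs_mult mult_right_le_one_le)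
      ultimately have "\<bar>p' b + \<alpha> * cos (w * L) - \<beta>\<bar> \<le> 2 * M * (b - a) + \<bar>\<alpha>\<bar> + \<bar>\<beta>\<bar>"
        by linarith
      then have "\<bar>p' b + \<alpha> * cos (w * L) - \<beta>\<bar> / \<bar>sin (w * L)\<bar>
                   \<le> (2 * M * (b - a) + \<bar>\<alpha>\<bar> + \<bar>\<beta>\<bar>) / \<sigma>"
        using assms(5,6) by (intro frac_le) (auto simp: L_def)
      then have "\<bar>p' b + \<alpha> * cos (w * L) - \<beta>\<bar> / \<bar>sin (w * L)\<bar> / w
                   \<le> (2 * M * (b - a) + \<bar>\<alpha>\<bar> + \<bar>\<beta>\<bar>) / \<sigma> / w"
        using assms(2) by (intro divide_right_mono) auto
      moreover have "\<bar>c\<bar> = \<bar>p' b + \<alpha> * cos (w * L) - \<beta>\<bar> / \<bar>sin (w * L)\<bar> / w"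
        using assms(2) by (simp add: c_def abs_mult)
      ultimately show ?thesis
        by linarith
    qed
    ultimately show "\<bar>z t\<bar> \<le> (2 * M * (b - a) + (2 * M * (b - a) + \<bar>\<alpha>\<bar> + \<bar>\<beta>\<bar>) / \<sigma> + \<bar>\<alpha>\<bar>) / w"
      unfolding z_def add_divide_distrib by linarith
  next
    show "z' a = \<alpha>"
      using assms(2) by (simp add: z'_def p'_def d_def)
    show "z' b = \<beta>"
      using assms(2) sin_L by (simp add: z'_def c_def d_def L_def[symmetric] field_simps)
  qed
qed

lemma sin_le_abs_sin_away_from_multiples_pi:
  fixes lam x :: real and n :: nat
  assumes "0 < lam" and "lam \<le> pi / 2"
    and "real n * pi + lam \<le> x" and "x \<le> (real n + 1) * pi - lam"
  shows "sin lam \<le> \<bar>sin x\<bar>"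
proof -
  define u where "u = x - real n * pi"
  have "\<bar>sin x\<bar> = \<bar>sin u\<bar>"
    by (simp add: u_def sin_diff abs_mult)
  moreover have "lam \<le> u" and "u \<le> pi - lam"
    using assms unfolding u_def by (auto simp: algebra_simps)
  moreover have "sin lam \<le> sin u"
  proof (cases "u \<le> pi / 2")
    case True
    then show ?thesis using sin_mono_le_eq[of lam u] \<open>lam \<le> u\<close> assms by auto
  next
    case False
    then have "sin lam \<le> sin (pi - u)"
      using sin_mono_le_eq[of lam "pi - u"] \<open>u \<le> pi - lam\<close> assms by auto
    then show ?thesis by simp
  qed
  ultimately show ?thesis by linarith
qed

lemma sqrt_div_mult_le_iff:
  fixes k e L X :: real
  assumes "k > 0" "e > 0" "L > 0" "X > 0"
  shows "sqrt (k / e) * L \<le> X \<longleftrightarrow> k * (L / X)\<^sup>2 \<le> e"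
proof -
  have "sqrt (k / e) * L \<le> X \<longleftrightarrow> k / e \<le> (X / L)\<^sup>2"
    using assms by (simp add: pos_le_divide_eq[symmetric] real_sqrt_le_iff')
  also have "\<dots> \<longleftrightarrow> k * (L / X)\<^sup>2 \<le> e"
    using assms by (simp add: field_simps)
  finally show ?thesis .
qed

lemma le_sqrt_div_mult_iff:
  fixes k e L X :: real
  assumes "k > 0" "e > 0" "L > 0" "X > 0"
  shows "X \<le> sqrt (k / e) * L \<longleftrightarrow> e \<le> k * (L / X)\<^sup>2"
proof -
  have "X \<le> sqrt (k / e) * L \<longleftrightarrow> sqrt ((X / L)\<^sup>2) \<le> sqrt (k / e)"
    using assms by (simp add: pos_divide_le_eq[symmetric])
  also have "\<dots> \<longleftrightarrow> e \<le> k * (L / X)\<^sup>2"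
    unfolding real_sqrt_le_iff using assms by (simp add: field_simps)
  finally show ?thesis .
qed

lemma J_int_pos:
  assumes "a < b" "k > 0" "lam \<le> pi / 2" "e \<in> J_int k a b lam n"
  shows "e > 0"
proof -
  have "0 \<le> real n * pi" "(real n + 1) * pi = real n * pi + pi"
    by (simp_all add: algebra_simps)
  then have "(real n + 1) * pi - lam > 0"
    using assms(3) pi_gt_zero by linarith
  then have "k * ((b - a) / ((real n + 1) * pi - lam))\<^sup>2 > 0"
    using assms(1,2) by simp
  then show ?thesis
    using assms(4) by (auto simp: J_int_def)
qed

lemma mem_J_int_iff:
  assumes "a < b" "k > 0" "0 < lam" "lam \<le> pi / 2" "e > 0"
  shows "e \<in> J_int k a b lam n \<longleftrightarrow>
    real n * pi + lam \<le> sqrt (k / e) * (b - a) \<and> sqrt (k / e) * (b - a) \<le> (real n + 1) * pi - lam"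
proof -
  have "0 \<le> real n * pi" "(real n + 1) * pi = real n * pi + pi"
    by (simp_all add: algebra_simps)
  then have "real n * pi + lam > 0" "(real n + 1) * pi - lam > 0"
    using assms(3,4) pi_gt_zero by linarith+
  then show ?thesis
    using assms by (auto simp: J_int_def sqrt_div_mult_le_iff le_sqrt_div_mult_iff)
qed

lemma sin_le_abs_sin_of_mem_J_int:
  assumes "a < b" "k > 0" "0 < lam" "lam \<le> pi / 2" "e \<in> J_int k a b lam n"
  shows "sin lam \<le> \<bar>sin (sqrt (k / e) * (b - a))\<bar>"
  using assms J_int_pos[OF assms(1,2,4,5)] mem_J_int_iff[OF assms(1-4)]
  by (intro sin_le_abs_sin_away_from_multiples_pi[of lam n]) auto

lemma sqrt_le_of_mem_J_int:
  assumes "a < b" "k > 0" "0 < lam" "e \<in> J_int k a b lam n"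
  shows "sqrt e \<le> sqrt k * (b - a) / (real n * pi + lam)"
proof -
  have "sqrt e \<le> sqrt (k * ((b - a) / (real n * pi + lam))\<^sup>2)"
    using assms(4) by (simp add: J_int_def)
  also have "\<dots> = sqrt k * (b - a) / (real n * pi + lam)"
    using assms(1,3) by (simp add: real_sqrt_mult add_nonneg_pos)
  finally show ?thesis .
qed

lemma neumann_sol_unique:
  assumes "a \<le> b" "k > 0" "e > 0" "sin (sqrt (k / e) * (b - a)) \<noteq> 0"
    and "neumann_sol e k f a b y" "neumann_sol e k f a b z" "t \<in> {a..b}"
  shows "y t = z t"
proof -
  define w where "w = sqrt (k / e)"
  have "w > 0" and k_eq: "k = e * w\<^sup>2"
    using assms(2,3) by (simp_all add: w_def)
  obtain y1 y2 where y:
    "\<And>t. t \<in> {a..b} \<Longrightarrow> (y has_real_derivative y1 t) (at t within {a..b})"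
    "\<And>t. t \<in> {a..b} \<Longrightarrow> (y1 has_real_derivative y2 t) (at t within {a..b})"
    "\<And>t. t \<in> {a..b} \<Longrightarrow> e * y2 t + k * y t = f t" "y1 a = 0" "y1 b = 0"
    using assms(5) unfolding neumann_sol_def by blast
  obtain z1 z2 where z:
    "\<And>t. t \<in> {a..b} \<Longrightarrow> (z has_real_derivative z1 t) (at t within {a..b})"
    "\<And>t. t \<in> {a..b} \<Longrightarrow> (z1 has_real_derivative z2 t) (at t within {a..b})"
    "\<And>t. t \<in> {a..b} \<Longrightarrow> e * z2 t + k * z t = f t" "z1 a = 0" "z1 b = 0"
    using assms(6) unfolding neumann_sol_def by blast
  have "y2 s - z2 s = - w\<^sup>2 * (y s - z s)" if "s \<in> {a..b}" for s
  proof -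
    have "e * (y2 s - z2 s + w\<^sup>2 * (y s - z s)) = 0"
      using y(3)[OF that] z(3)[OF that] by (simp add: k_eq algebra_simps)
    then show ?thesis
      using assms(3) by simp
  qed
  then have "((\<lambda>s. y s - z s) has_real_derivative y1 s - z1 s) (at s within {a..b})"
    and "((\<lambda>s. y1 s - z1 s) has_real_derivative - w\<^sup>2 * (y s - z s)) (at s within {a..b})"
    if "s \<in> {a..b}" for s
    using DERIV_diff[OF y(1) z(1), OF that that] DERIV_diff[OF y(2) z(2), OF that that] that
    by simp_all
  then have "y t - z t = 0"
    using harmonic_neumann_eq_0[of a b w "\<lambda>s. y s - z s" "\<lambda>s. y1 s - z1 s" t]
      assms(1,4,7) \<open>w > 0\<close> y(4,5) z(4,5) by (simp add: w_def)
  then show ?thesis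
    by simp
qed

lemma neumann_sol_exists_near_reduced:
  fixes f f1 f2 :: "real \<Rightarrow> real"
  assumes "a \<le> b" "k > 0" "e > 0"
    and f: "\<And>t. t \<in> {a..b} \<Longrightarrow> (f has_real_derivative f1 t) (at t within {a..b})"
    and f1: "\<And>t. t \<in> {a..b} \<Longrightarrow> (f1 has_real_derivative f2 t) (at t within {a..b})"
    and "continuous_on {a..b} f2"
    and M1: "\<And>t. t \<in> {a..b} \<Longrightarrow> \<bar>f1 t / k\<bar> \<le> M1"
    and M2: "\<And>t. t \<in> {a..b} \<Longrightarrow> \<bar>f2 t / k\<bar> \<le> M2"
    and "0 < \<sigma>" "\<sigma> \<le> \<bar>sin (sqrt (k / e) * (b - a))\<bar>"
  shows "\<exists>y. neumann_sol e k f a b y \<and> (\<forall>t\<in>{a..b}.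
           \<bar>y t - f t / k\<bar> \<le> (2 * M2 * (b - a) + (2 * M2 * (b - a) + 2 * M1) / \<sigma> + M1) / sqrt k * sqrt e)"
proof -
  define w where "w = sqrt (k / e)"
  have "w > 0" and ew: "e * w\<^sup>2 = k"
    using assms(2,3) by (simp_all add: w_def)
  have "continuous_on {a..b} (\<lambda>t. - f2 t / k)"
    using assms(2,6) by (intro continuous_intros) auto
  then obtain z z1 where z:
    "\<And>t. t \<in> {a..b} \<Longrightarrow> (z has_real_derivative z1 t) (at t within {a..b})"
    "\<And>t. t \<in> {a..b} \<Longrightarrow> (z1 has_real_derivative - f2 t / k - w\<^sup>2 * z t) (at t within {a..b})"
    "z1 a = - f1 a / k" "z1 b = - f1 b / k"
    and z_bound: "\<And>t. t \<in> {a..b} \<Longrightarrow> \<bar>z t\<bar> \<le> (2 * M2 * (b - a)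
       + (2 * M2 * (b - a) + \<bar>- f1 a / k\<bar> + \<bar>- f1 b / k\<bar>) / \<sigma> + \<bar>- f1 a / k\<bar>) / w"
    using harmonic_neumann_solution[OF assms(1) \<open>w > 0\<close>, of "\<lambda>t. - f2 t / k" M2 \<sigma> "- f1 a / k" "- f1 b / k"]
      M2 assms(9,10) unfolding w_def by auto
  define y where "y t = f t / k + z t" for t
  have "neumann_sol e k f a b y"
    unfolding neumann_sol_def
  proof (intro exI conjI ballI)
    fix t assume t: "t \<in> {a..b}"
    show "(y has_real_derivative f1 t / k + z1 t) (at t within {a..b})"
      unfolding y_def[abs_def] using f[OF t] z(1)[OF t] assms(2) by (auto intro!: derivative_eq_intros)
    show "((\<lambda>t. f1 t / k + z1 t) has_real_derivative - w\<^sup>2 * z t) (at t within {a..b})"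
      using f1[OF t] z(2)[OF t] assms(2) by (auto intro!: derivative_eq_intros)
    show "e * (- w\<^sup>2 * z t) + k * y t = f t"
      using ew assms(2) by (simp add: y_def algebra_simps)
  next
    have "continuous_on {a..b} z"
      using z(1) by (rule DERIV_continuous_on)
    then show "continuous_on {a..b} (\<lambda>t. - w\<^sup>2 * z t)"
      by (intro continuous_intros)
  qed (use z(3,4) in simp_all)
  moreover have "\<bar>y t - f t / k\<bar> \<le> (2 * M2 * (b - a) + (2 * M2 * (b - a) + 2 * M1) / \<sigma> + M1) / sqrt k * sqrt e"
    if t: "t \<in> {a..b}" for t
  proof -
    have "\<bar>- f1 a / k\<bar> \<le> M1" "\<bar>- f1 b / k\<bar> \<le> M1"
      using M1 assms(1) by auto
    then have "(2 * M2 * (b - a) + \<bar>- f1 a / k\<bar> + \<bar>- f1 b / k\<bar>) / \<sigma> \<le> (2 * M2 * (b - a) + 2 * M1) / \<sigma>"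
      using assms(9) by (intro divide_right_mono) auto
    then have "2 * M2 * (b - a) + (2 * M2 * (b - a) + \<bar>- f1 a / k\<bar> + \<bar>- f1 b / k\<bar>) / \<sigma> + \<bar>- f1 a / k\<bar>
        \<le> 2 * M2 * (b - a) + (2 * M2 * (b - a) + 2 * M1) / \<sigma> + M1"
      using \<open>\<bar>- f1 a / k\<bar> \<le> M1\<close> by linarith
    then have "\<bar>z t\<bar> \<le> (2 * M2 * (b - a) + (2 * M2 * (b - a) + 2 * M1) / \<sigma> + M1) / w"
      using z_bound[OF t] \<open>w > 0\<close> by (meson divide_right_mono less_imp_le order_trans)
    also have "\<dots> = (2 * M2 * (b - a) + (2 * M2 * (b - a) + 2 * M1) / \<sigma> + M1) / sqrt k * sqrt e"
      using assms(2,3) by (simp add: w_def real_sqrt_divide)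
    finally show ?thesis
      by (simp add: y_def)
  qed
  ultimately show ?thesis
    by blast
qed

lemma neumann_sol_J_int:
  fixes f f1 f2 :: "real \<Rightarrow> real"
  assumes "a < b" "k > 0" "0 < lam" "lam \<le> pi / 2"
    and "\<And>t. t \<in> {a..b} \<Longrightarrow> (f has_real_derivative f1 t) (at t within {a..b})"
    and "\<And>t. t \<in> {a..b} \<Longrightarrow> (f1 has_real_derivative f2 t) (at t within {a..b})"
    and "continuous_on {a..b} f2"
    and "\<And>t. t \<in> {a..b} \<Longrightarrow> \<bar>f1 t / k\<bar> \<le> M1"
    and "\<And>t. t \<in> {a..b} \<Longrightarrow> \<bar>f2 t / k\<bar> \<le> M2"
    and e: "e \<in> J_int k a b lam n"
  defines "C \<equiv> (2 * M2 * (b - a) + (2 * M2 * (b - a) + 2 * M1) / sin lam + M1) / sqrt k"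
  shows "\<exists>y. neumann_sol e k f a b y"
    and "\<And>y z t. neumann_sol e k f a b y \<Longrightarrow> neumann_sol e k f a b z \<Longrightarrow> t \<in> {a..b} \<Longrightarrow> y t = z t"
    and "\<And>y t. neumann_sol e k f a b y \<Longrightarrow> t \<in> {a..b} \<Longrightarrow> \<bar>y t - f t / k\<bar> \<le> C * sqrt e"
proof -
  have "e > 0"
    using J_int_pos[OF assms(1,2,4) e] .
  have "sin lam > 0"
    using assms(3,4) by (intro sin_gt_zero) auto
  moreover have sin_ge: "sin lam \<le> \<bar>sin (sqrt (k / e) * (b - a))\<bar>"
    using sin_le_abs_sin_of_mem_J_int[OF assms(1-4) e] .
  ultimately obtain y0 where y0: "neumann_sol e k f a b y0"
    and y0_bound: "\<forall>t\<in>{a..b}. \<bar>y0 t - f t / k\<bar> \<le> C * sqrt e"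
    using neumann_sol_exists_near_reduced[OF _ assms(2) \<open>e > 0\<close> assms(5-9)] assms(1)
    unfolding C_def by fastforce
  show "\<exists>y. neumann_sol e k f a b y"
    using y0 by blast
  show unique: "y t = z t"
    if "neumann_sol e k f a b y" "neumann_sol e k f a b z" "t \<in> {a..b}" for y z t
    using neumann_sol_unique[OF _ assms(2) \<open>e > 0\<close> _ that] assms(1) sin_ge \<open>sin lam > 0\<close> by auto
  show "\<bar>y t - f t / k\<bar> \<le> C * sqrt e" if "neumann_sol e k f a b y" "t \<in> {a..b}" for y t
    using unique[OF that(1) y0 that(2)] y0_bound that(2) by simp
qed

lemma sqrt_J_int_tendsto_0:
  assumes "a < b" "k > 0" "0 < lam" "lam \<le> pi / 2" "\<And>n. eps n \<in> J_int k a b lam n"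
  shows "(\<lambda>n. sqrt (eps n)) \<longlonglongrightarrow> 0"
proof (rule real_tendsto_sandwich)
  show "\<forall>\<^sub>F n in sequentially. 0 \<le> sqrt (eps n)"
    using J_int_pos[OF assms(1,2,4,5)] by (simp add: less_imp_le)
  show "\<forall>\<^sub>F n in sequentially. sqrt (eps n) \<le> sqrt k * (b - a) / (real n * pi + lam)"
    using sqrt_le_of_mem_J_int[OF assms(1-3,5)] by simp
  show "(\<lambda>n. sqrt k * (b - a) / (real n * pi + lam)) \<longlonglongrightarrow> 0"
    by real_asymp
qed simp

theorem theorem1:
  fixes a b k lam :: real and f :: "real \<Rightarrow> real"
  assumes "a < b" and "k > 0" and "0 < lam" and "lam \<le> pi / 2"
    and "C3_on a b f"
  shows "\<exists>C. \<forall>eps :: nat \<Rightarrow> real. (\<forall>n. eps n \<in> J_int k a b lam n) \<longrightarrow>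
     (\<forall>n. (\<exists>y. neumann_sol (eps n) k f a b y)
          \<and> (\<forall>y z. neumann_sol (eps n) k f a b y \<and> neumann_sol (eps n) k f a b z
                   \<longrightarrow> (\<forall>t\<in>{a..b}. y t = z t))
          \<and> (\<forall>y. neumann_sol (eps n) k f a b y
                   \<longrightarrow> (\<forall>t\<in>{a..b}. \<bar>y t - f t / k\<bar> \<le> C * sqrt (eps n))))
     \<and> (\<forall>e>0. \<exists>N. \<forall>n\<ge>N. \<forall>y. neumann_sol (eps n) k f a b y
                   \<longrightarrow> (\<forall>t\<in>{a..b}. \<bar>y t - f t / k\<bar> < e))"
proof -
  obtain f1 f2 f3 where f:
    "\<And>t. t \<in> {a..b} \<Longrightarrow> (f has_real_derivative f1 t) (at t within {a..b})"
    "\<And>t. t \<in> {a..b} \<Longrightarrow> (f1 has_real_derivative f2 t) (at t within {a..b})"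
    "\<And>t. t \<in> {a..b} \<Longrightarrow> (f2 has_real_derivative f3 t) (at t within {a..b})"
    using assms(5) unfolding C3_on_def by blast
  have "continuous_on {a..b} f1" "continuous_on {a..b} f2"
    using DERIV_continuous_on[OF f(2)] DERIV_continuous_on[OF f(3)] by auto
  then have "bounded ((\<lambda>t. f1 t / k) ` {a..b})" "bounded ((\<lambda>t. f2 t / k) ` {a..b})"
    using assms(2) by (auto intro!: compact_imp_bounded compact_continuous_image continuous_intros)
  then obtain M1 M2 where M1: "\<And>t. t \<in> {a..b} \<Longrightarrow> \<bar>f1 t / k\<bar> \<le> M1"
    and M2: "\<And>t. t \<in> {a..b} \<Longrightarrow> \<bar>f2 t / k\<bar> \<le> M2"
    unfolding bounded_real by blast
  define C where "C = (2 * M2 * (b - a) + (2 * M2 * (b - a) + 2 * M1) / sin lam + M1) / sqrt k"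
  note sol = neumann_sol_J_int[OF assms(1-4) f(1,2) \<open>continuous_on {a..b} f2\<close> M1 M2, folded C_def]
  have "\<exists>N. \<forall>n\<ge>N. \<forall>y. neumann_sol (eps n) k f a b y \<longrightarrow> (\<forall>t\<in>{a..b}. \<bar>y t - f t / k\<bar> < e)"
    if eps: "\<forall>n. eps n \<in> J_int k a b lam n" and "e > 0" for eps e
  proof -
    have "(\<lambda>n. C * sqrt (eps n)) \<longlonglongrightarrow> 0"
      using tendsto_mult_right_zero[OF sqrt_J_int_tendsto_0[OF assms(1-4)]] eps by blast
    then have "\<forall>\<^sub>F n in sequentially. C * sqrt (eps n) < e"
      using \<open>e > 0\<close> by (rule order_tendstoD(2))
    then obtain N where "\<And>n. n \<ge> N \<Longrightarrow> C * sqrt (eps n) < e"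
      by (auto simp: eventually_sequentially)
    then show ?thesis
      using sol(3) eps by (meson le_less_trans)
  qed
  then show ?thesis
    using sol by (intro exI[of _ C]) blast
qed

end
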